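(* Let $f(z)=e^{-z+\lambda}+\xi$ with $\lambda,\xi\in\mathbb{C}$, $\operatorname{Re}\lambda<0$, $\operatorname{Re}\xi\ge1$, and let $g(z)=e^{z+\mu}+\zeta$ with $\mu,\zeta\in\mathbb{C}$, $\operatorname{Re}\mu<0$, $\operatorname{Re}\zeta\le-1$. Then $I(f)\cap I(g)=\emptyset$.
   Context: For an entire function $f$, $f^n$ denotes the $n$-th iterate and $I(f)=\{z\in\mathbb{C}: f^n(z)\to\infty\}$ is its escaping set. *)

theory Defs
  imports "HOL-Analysis.Analysis"
begin

definition escaping_set :: "(complex \<Rightarrow> complex) \<Rightarrow> complex set" where
  "escaping_set f = {z. filterlim (\<lambda>n. (f ^^ n) z) at_infinity sequentially}"

end

theory Submission
  imports Defs
begin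

text \<open>
  The closed right half-plane is forward invariant under \<open>f\<close>: there \<open>|exp (-z + \<lambda>)| \<le> 1\<close>,
  so \<open>f\<close> moves points by a term of modulus at most 1 from \<open>\<xi>\<close>, and \<open>Re \<xi> \<ge> 1\<close> keeps the
  image in the half-plane. Hence orbits of \<open>f\<close> starting there stay bounded. Symmetrically,
  orbits of \<open>g\<close> starting in the closed left half-plane stay bounded. Every point lies in
  one of the two half-planes, so it escapes under at most one of the two maps.
\<close>

lemma bounded_orbit_not_escaping:
  assumes "\<And>n. norm ((F ^^ n) z) \<le> B"
  shows "z \<notin> escaping_set F"
proof
  assume "z \<in> escaping_set F"
  then have "filterlim (\<lambda>n. norm ((F ^^ n) z)) at_top sequentially"
    unfolding escaping_set_def by (auto intro: filterlim_at_infinity_imp_norm_at_top)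
  then have "eventually (\<lambda>n. norm ((F ^^ n) z) > B) sequentially"
    by (simp add: filterlim_at_top_dense)
  then obtain n where "norm ((F ^^ n) z) > B"
    by (auto simp: eventually_sequentially)
  with assms[of n] show False by simp
qed

lemma invariant_bounded_set_not_escaping:
  assumes invariant: "\<And>w. w \<in> S \<Longrightarrow> F w \<in> S"
    and bounded: "\<And>w. w \<in> S \<Longrightarrow> norm (F w) \<le> B"
    and "z \<in> S"
  shows "z \<notin> escaping_set F"
proof (rule bounded_orbit_not_escaping)
  have orbit: "(F ^^ n) z \<in> S" for n
    by (induction n) (simp_all add: \<open>z \<in> S\<close> invariant)
  show "norm ((F ^^ n) z) \<le> max (norm z) B" for n
    by (cases n) (auto simp: bounded orbit le_max_iff_disj)
qed

lemma Re_add_ge_0_if_norm_le_1: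
  fixes e d :: complex
  assumes "norm e \<le> 1" and "Re d \<ge> 1"
  shows "Re (e + d) \<ge> 0"
  using abs_Re_le_cmod[of e] assms by simp

lemma norm_exp_le_1: "Re w \<le> 0 \<Longrightarrow> norm (exp w) \<le> 1"
  by (simp add: norm_exp_eq_Re)

lemma right_half_plane_not_escaping:
  fixes lam xi :: complex
  assumes "Re lam < 0" and "Re xi \<ge> 1" and "Re z \<ge> 0"
  shows "z \<notin> escaping_set (\<lambda>z. exp (-z + lam) + xi)"
proof (rule invariant_bounded_set_not_escaping[where S = "{w. Re w \<ge> 0}"])
  fix w assume "w \<in> {w. Re w \<ge> 0}"
  then have exp_le: "norm (exp (-w + lam)) \<le> 1"
    using assms(1) by (intro norm_exp_le_1) simp
  show "exp (-w + lam) + xi \<in> {w. Re w \<ge> 0}"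
    using Re_add_ge_0_if_norm_le_1[OF exp_le assms(2)] by simp
  show "norm (exp (-w + lam) + xi) \<le> 1 + norm xi"
    using norm_triangle_ineq[of "exp (-w + lam)" xi] exp_le by linarith
qed (use assms(3) in simp)

lemma left_half_plane_not_escaping:
  fixes mu zeta :: complex
  assumes "Re mu < 0" and "Re zeta \<le> -1" and "Re z \<le> 0"
  shows "z \<notin> escaping_set (\<lambda>z. exp (z + mu) + zeta)"
proof (rule invariant_bounded_set_not_escaping[where S = "{w. Re w \<le> 0}"])
  fix w assume "w \<in> {w. Re w \<le> 0}"
  then have exp_le: "norm (- exp (w + mu)) \<le> 1"
    using assms(1) by (simp add: norm_exp_le_1)
  have "Re (- exp (w + mu) + - zeta) \<ge> 0"
    using assms(2) by (intro Re_add_ge_0_if_norm_le_1[OF exp_le]) simp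
  then show "exp (w + mu) + zeta \<in> {w. Re w \<le> 0}"
    by simp
  show "norm (exp (w + mu) + zeta) \<le> 1 + norm zeta"
    using norm_triangle_ineq[of "exp (w + mu)" zeta] exp_le by (simp del: norm_exp_eq_Re)
qed (use assms(3) in simp)

theorem corollary1:
  fixes lam xi mu zeta :: complex
  assumes "Re lam < 0" and "Re xi \<ge> 1"
    and "Re mu < 0" and "Re zeta \<le> -1"
  shows "escaping_set (\<lambda>z. exp (-z + lam) + xi) \<inter> escaping_set (\<lambda>z. exp (z + mu) + zeta) = {}"
proof -
  have "z \<notin> escaping_set (\<lambda>z. exp (z + mu) + zeta)"
    if "z \<in> escaping_set (\<lambda>z. exp (-z + lam) + xi)" for z
  proof -
    from that have "Re z < 0"
      using right_half_plane_not_escaping[OF assms(1,2), of z] by linarith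
    then show ?thesis
      using left_half_plane_not_escaping[OF assms(3,4)] by simp
  qed
  then show ?thesis by blast
qed

end
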